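(* For a commutative ring $R$ the following are equivalent: (i) $R$ is a quasi p.f. ring; (ii) $R_{\mathfrak p}$ is a primary ring for all $\mathfrak p\in\operatorname{Spec}(R)$; (iii) $R_{\mathfrak m}$ is a primary ring for all maximal ideals $\mathfrak m$ of $R$; (iv) $\ker(R\to R_{\mathfrak p})$ is a pure ideal for every minimal prime ideal $\mathfrak p$ of $R$; (v) $\ker(R\to R_{\mathfrak m})$ is a primary ideal for every maximal ideal $\mathfrak m$ of $R$.
   Context: An ideal $I$ is quasi-pure if for each $f\in I$ there is $g\in I$ with $f(1-g)$ nilpotent. $R$ is a quasi p.f. ring if $\operatorname{Ann}(f)$ is quasi-pure for every $f\in R$. An ideal $I$ is pure if for each $f\in I$ there is $g\in I$ with $f(1-g)=0$. A ring is primary if its zero ideal is primary (every zero-divisor is nilpotent). *)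

theory Defs
  imports "HOL-Algebra.QuotRing"
begin

definition quasi_pure :: "('a, 'b) ring_scheme \<Rightarrow> 'a set \<Rightarrow> bool" where
  "quasi_pure R I \<longleftrightarrow> ideal I R \<and>
     (\<forall>f\<in>I. \<exists>g\<in>I. \<exists>n::nat. (f \<otimes>\<^bsub>R\<^esub> (\<one>\<^bsub>R\<^esub> \<ominus>\<^bsub>R\<^esub> g)) [^]\<^bsub>R\<^esub> n = \<zero>\<^bsub>R\<^esub>)"

definition pure_ideal :: "('a, 'b) ring_scheme \<Rightarrow> 'a set \<Rightarrow> bool" where
  "pure_ideal R I \<longleftrightarrow> ideal I R \<and>
     (\<forall>f\<in>I. \<exists>g\<in>I. f \<otimes>\<^bsub>R\<^esub> (\<one>\<^bsub>R\<^esub> \<ominus>\<^bsub>R\<^esub> g) = \<zero>\<^bsub>R\<^esub>)"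

definition ann :: "('a, 'b) ring_scheme \<Rightarrow> 'a \<Rightarrow> 'a set" where
  "ann R f = {x \<in> carrier R. x \<otimes>\<^bsub>R\<^esub> f = \<zero>\<^bsub>R\<^esub>}"

definition quasi_pf_ring :: "('a, 'b) ring_scheme \<Rightarrow> bool" where
  "quasi_pf_ring R \<longleftrightarrow> (\<forall>f\<in>carrier R. quasi_pure R (ann R f))"

definition primary_ideal :: "('a, 'b) ring_scheme \<Rightarrow> 'a set \<Rightarrow> bool" where
  "primary_ideal R I \<longleftrightarrow> ideal I R \<and> I \<noteq> carrier R \<and>
     (\<forall>a\<in>carrier R. \<forall>b\<in>carrier R. a \<otimes>\<^bsub>R\<^esub> b \<in> I \<and> a \<notin> I \<longrightarrow>
        (\<exists>n::nat. b [^]\<^bsub>R\<^esub> n \<in> I))"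

definition primary_ring :: "('a, 'b) ring_scheme \<Rightarrow> bool" where
  "primary_ring R \<longleftrightarrow> primary_ideal R {\<zero>\<^bsub>R\<^esub>}"

definition minimal_prime :: "('a, 'b) ring_scheme \<Rightarrow> 'a set \<Rightarrow> bool" where
  "minimal_prime R P \<longleftrightarrow> primeideal P R \<and>
     (\<forall>Q. primeideal Q R \<and> Q \<subseteq> P \<longrightarrow> Q = P)"

definition loc_rel :: "('a, 'b) ring_scheme \<Rightarrow> 'a set \<Rightarrow> (('a \<times> 'a) \<times> ('a \<times> 'a)) set" where
  "loc_rel R S = {((a, s), (b, t)). a \<in> carrier R \<and> s \<in> S \<and> b \<in> carrier R \<and> t \<in> S \<and>
     (\<exists>u\<in>S. u \<otimes>\<^bsub>R\<^esub> (a \<otimes>\<^bsub>R\<^esub> t \<ominus>\<^bsub>R\<^esub> b \<otimes>\<^bsub>R\<^esub> s) = \<zero>\<^bsub>R\<^esub>)}"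

definition frac :: "('a, 'b) ring_scheme \<Rightarrow> 'a set \<Rightarrow> 'a \<Rightarrow> 'a \<Rightarrow> ('a \<times> 'a) set" where
  "frac R S a s = loc_rel R S `` {(a, s)}"

text \<open>Operations are defined on representatives; taking the union over all
  representatives yields the (well-defined) class.\<close>
definition localization :: "('a, 'b) ring_scheme \<Rightarrow> 'a set \<Rightarrow> ('a \<times> 'a) set ring" where
  "localization R S =
    \<lparr> carrier = (carrier R \<times> S) // loc_rel R S,
      mult = (\<lambda>X Y. \<Union>x\<in>X. \<Union>y\<in>Y. frac R S (fst x \<otimes>\<^bsub>R\<^esub> fst y) (snd x \<otimes>\<^bsub>R\<^esub> snd y)),
      one = frac R S \<one>\<^bsub>R\<^esub> \<one>\<^bsub>R\<^esub>,
      zero = frac R S \<zero>\<^bsub>R\<^esub> \<one>\<^bsub>R\<^esub>,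
      add = (\<lambda>X Y. \<Union>x\<in>X. \<Union>y\<in>Y.
               frac R S (fst x \<otimes>\<^bsub>R\<^esub> snd y \<oplus>\<^bsub>R\<^esub> fst y \<otimes>\<^bsub>R\<^esub> snd x) (snd x \<otimes>\<^bsub>R\<^esub> snd y)) \<rparr>"

definition localization_at :: "('a, 'b) ring_scheme \<Rightarrow> 'a set \<Rightarrow> ('a \<times> 'a) set ring" where
  "localization_at R P = localization R (carrier R - P)"

definition loc_map :: "('a, 'b) ring_scheme \<Rightarrow> 'a set \<Rightarrow> 'a \<Rightarrow> ('a \<times> 'a) set" where
  "loc_map R P a = frac R (carrier R - P) a \<one>\<^bsub>R\<^esub>"

definition loc_kernel :: "('a, 'b) ring_scheme \<Rightarrow> 'a set \<Rightarrow> 'a set" where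
  "loc_kernel R P = {a \<in> carrier R. loc_map R P a = \<zero>\<^bsub>localization_at R P\<^esub>}"

end

theory Submission
  imports "HOL-Algebra.Ring_Divisibility" Defs
    (* Defs comes last so that frac means Defs.frac, not Archimedean_Field.frac *)
begin

text \<open>
  Everything is governed by the kernel \<open>K\<^sub>p = {a. u a = 0 for some u \<notin> p}\<close> of \<open>R -> R\<^sub>p\<close>:
  \<open>R\<^sub>p\<close> is a primary ring exactly when \<open>K\<^sub>p\<close> is a primary ideal.
  If \<open>Ann(u a)\<close> is quasi-pure and \<open>u a b = 0\<close> with \<open>u \<notin> p\<close>, there is \<open>g\<close> with \<open>g u a = 0\<close>
  and \<open>b (1 - g)\<close> nilpotent; then \<open>g \<in> p\<close>, since otherwise \<open>g u \<notin> p\<close> kills \<open>a\<close>, so a power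
  of \<open>b\<close> is killed by a power of \<open>1 - g \<notin> p\<close>. Purity of \<open>K\<^sub>p\<close> comes from the same kind of \<open>g\<close>.
  Conversely, let \<open>x f = 0\<close> with \<open>x (1 - g)\<close> nilpotent for no \<open>g \<in> Ann(f)\<close>. Then
  \<open>Ann(f) + {w. w x\<^sup>n = 0 for some n}\<close> is a proper ideal, and at a maximal ideal \<open>m\<close>
  containing it neither \<open>f\<close> nor a power of \<open>x\<close> lies in \<open>K\<^sub>m\<close>, although \<open>f x = 0\<close>.
  Also the multiplicative set \<open>{x\<^sup>n (1 - g). g \<in> Ann(f)}\<close> misses \<open>0\<close>, so some minimal prime
  \<open>p\<close> avoids it, and then \<open>f \<in> K\<^sub>p\<close> but \<open>f (1 - g) = 0\<close> for no \<open>g \<in> K\<^sub>p\<close>.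
\<close>

context cring
begin

lemma idealI_comm:
  assumes "I \<subseteq> carrier R" "\<zero> \<in> I" "\<And>a b. a \<in> I \<Longrightarrow> b \<in> I \<Longrightarrow> a \<oplus> b \<in> I"
    and "\<And>a x. a \<in> I \<Longrightarrow> x \<in> carrier R \<Longrightarrow> x \<otimes> a \<in> I"
  shows "ideal I R"
proof (rule idealI)
  have "\<ominus> a \<in> I" if "a \<in> I" for a
    using assms(4)[OF that, of "\<ominus> \<one>"] assms(1) that by (auto simp: l_minus)
  then show "subgroup I (add_monoid R)"
    using assms(1-3) by (auto simp: subgroup_def a_inv_def[symmetric])
  show "\<And>a x. a \<in> I \<Longrightarrow> x \<in> carrier R \<Longrightarrow> a \<otimes> x \<in> I"
    using assms(1,4) m_comm by (metis subsetD)
qed (use assms ring_axioms in auto)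

lemma ann_ideal: "f \<in> carrier R \<Longrightarrow> ideal (ann R f) R"
  by (rule idealI_comm) (auto simp: ann_def l_distr m_assoc)

lemma nilpotent_of_pow_mult_eq_zero:
  assumes "x \<in> carrier R" "y \<in> carrier R" "x [^] n \<otimes> y = \<zero>"
  shows "(x \<otimes> y) [^] Suc n = \<zero>"
proof -
  have "(x \<otimes> y) [^] Suc n = (x [^] n \<otimes> y [^] n) \<otimes> (x \<otimes> y)"
    using assms(1,2) by (simp add: nat_pow_distrib)
  also have "\<dots> = (x [^] n \<otimes> y) \<otimes> (y [^] n \<otimes> x)"
    using assms(1,2) nat_pow_closed by algebra
  also have "\<dots> = \<zero>"
    using assms by simp
  finally show ?thesis .
qed

lemma mult_pow_one_minus_annihilator:
  assumes "f \<in> carrier R" "g \<in> carrier R" "g \<otimes> f = \<zero>"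
  shows "f \<otimes> (\<one> \<ominus> g) [^] (n::nat) = f"
proof (induction n)
  case (Suc n)
  have "f \<otimes> (\<one> \<ominus> g) = f \<ominus> g \<otimes> f"
    using assms(1,2) by algebra
  with Suc show ?case
    using assms by (simp add: m_assoc[symmetric] a_minus_def)
qed (use assms in simp)

lemma exists_maximal_ideal_disjoint:
  assumes "ideal I R" "I \<inter> T = {}"
  obtains J where "ideal J R" "I \<subseteq> J" "J \<inter> T = {}"
    "\<And>J'. ideal J' R \<Longrightarrow> J \<subseteq> J' \<Longrightarrow> J' \<inter> T = {} \<Longrightarrow> J' = J"
proof -
  let ?A = "{J. ideal J R \<and> I \<subseteq> J \<and> J \<inter> T = {}}"
  have "\<exists>J\<in>?A. \<forall>J'\<in>?A. J \<subseteq> J' \<longrightarrow> J' = J"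
  proof (rule subset_Zorn_nonempty)
    fix C assume C: "C \<noteq> {}" "subset.chain ?A C"
    then have "subset.chain {J. ideal J R} C"
      by (auto simp: subset_chain_def)
    then have "ideal (\<Union>C) R"
      using chain_Union_is_ideal[of C] C(1) by simp
    with C show "\<Union>C \<in> ?A"
      by (auto simp: subset_chain_def)
  qed (use assms in auto)
  then obtain J where J: "ideal J R" "I \<subseteq> J" "J \<inter> T = {}"
    and max: "\<forall>J'\<in>?A. J \<subseteq> J' \<longrightarrow> J' = J"
    by auto
  show ?thesis
  proof (rule that[OF J])
    fix J' assume "ideal J' R" "J \<subseteq> J'" "J' \<inter> T = {}"
    with max J(2) show "J' = J"
      by auto
  qed
qed

lemma exists_maximalideal_superset:
  assumes "ideal I R" "\<one> \<notin> I"
  obtains M where "maximalideal M R" "I \<subseteq> M"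
proof -
  obtain J where J: "ideal J R" "I \<subseteq> J" "J \<inter> {\<one>} = {}"
    and max: "\<And>J'. ideal J' R \<Longrightarrow> J \<subseteq> J' \<Longrightarrow> J' \<inter> {\<one>} = {} \<Longrightarrow> J' = J"
    using exists_maximal_ideal_disjoint[OF assms(1), of "{\<one>}"] assms(2) by auto
  have "maximalideal J R"
  proof (rule maximalidealI)
    fix J' assume J': "ideal J' R" "J \<subseteq> J'" "J' \<subseteq> carrier R"
    show "J' = J \<or> J' = carrier R"
    proof (cases "\<one> \<in> J'")
      case True
      then show ?thesis
        using ideal.one_imp_carrier[OF J'(1)] by simp
    qed (use max J' in auto)
  qed (use J in auto)
  with J(2) that show ?thesis
    by blast
qed

lemma primeideal_Inter_chain:
  assumes "C \<noteq> {}" "\<And>P. P \<in> C \<Longrightarrow> primeideal P R"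
    and chain: "\<And>P Q. P \<in> C \<Longrightarrow> Q \<in> C \<Longrightarrow> P \<subseteq> Q \<or> Q \<subseteq> P"
  shows "primeideal (\<Inter>C) R"
proof (rule primeidealI)
  show "ideal (\<Inter>C) R"
    using assms(1,2) by (intro i_Intersect) (auto dest: primeideal.axioms(1))
  obtain P where "P \<in> C"
    using assms(1) by blast
  then have "\<one> \<notin> \<Inter>C"
    using assms(2) ideal.one_imp_carrier primeideal.axioms(1) primeideal.I_notcarr by blast
  then show "carrier R \<noteq> \<Inter>C"
    by auto
  fix a b assume ab: "a \<in> carrier R" "b \<in> carrier R" "a \<otimes> b \<in> \<Inter>C"
  show "a \<in> \<Inter>C \<or> b \<in> \<Inter>C"
  proof (rule ccontr)
    assume "\<not> (a \<in> \<Inter>C \<or> b \<in> \<Inter>C)"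
    then obtain P1 P2 where P: "P1 \<in> C" "a \<notin> P1" "P2 \<in> C" "b \<notin> P2"
      by auto
    then obtain P where "P \<in> C" "a \<notin> P" "b \<notin> P"
      using chain[OF P(1,3)] by (metis subsetD)
    then show False
      using ab primeideal.I_prime[OF assms(2)[OF \<open>P \<in> C\<close>]] by auto
  qed
qed (rule is_cring)

lemma exists_minimal_prime_below:
  assumes "primeideal Q R"
  obtains P where "minimal_prime R P" "P \<subseteq> Q"
proof -
  let ?A = "{P. primeideal P R \<and> P \<subseteq> Q}"
  have "\<exists>P\<in>?A. \<forall>P'\<in>?A. P' \<subseteq> P \<longrightarrow> P' = P"
  proof (rule predicate_Zorn)
    show "partial_order_on ?A (relation_of (\<lambda>P P'. P' \<subseteq> P) ?A)"
      by (rule partial_order_on_relation_ofI) auto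
  next
    fix C assume C: "C \<in> Chains (relation_of (\<lambda>P P'. P' \<subseteq> P) ?A)"
    then have "C \<subseteq> ?A"
      by (rule Chains_relation_of)
    show "\<exists>U\<in>?A. \<forall>P\<in>C. U \<subseteq> P"
    proof (cases "C = {}")
      case False
      have "primeideal (\<Inter>C) R"
      proof (rule primeideal_Inter_chain)
        fix P P' assume "P \<in> C" "P' \<in> C"
        with C show "P \<subseteq> P' \<or> P' \<subseteq> P"
          by (auto simp: Chains_def relation_of_def)
      qed (use False \<open>C \<subseteq> ?A\<close> in auto)
      with False \<open>C \<subseteq> ?A\<close> show ?thesis
        by (intro bexI[of _ "\<Inter>C"]) auto
    qed (use assms in auto)
  qed
  then obtain P where P: "primeideal P R" "P \<subseteq> Q"
    and min: "\<forall>P'\<in>?A. P' \<subseteq> P \<longrightarrow> P' = P"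
    by auto
  have "minimal_prime R P"
    using P min by (auto simp: minimal_prime_def)
  then show ?thesis
    using P(2) by (rule that)
qed

lemma primary_ring_iff:
  "primary_ring R \<longleftrightarrow> \<one> \<noteq> \<zero> \<and>
     (\<forall>a\<in>carrier R. \<forall>b\<in>carrier R. a \<otimes> b = \<zero> \<and> a \<noteq> \<zero> \<longrightarrow> (\<exists>n::nat. b [^] n = \<zero>))"
proof -
  have "{\<zero>} \<noteq> carrier R \<longleftrightarrow> \<one> \<noteq> \<zero>"
    using one_zeroD one_zeroI by auto
  then show ?thesis
    by (auto simp: primary_ring_def primary_ideal_def zeroideal)
qed

end

section \<open>Localization at a multiplicative set\<close>

locale multiplicative_set = cring +
  fixes S :: "'a set"
  assumes subset_carrier: "S \<subseteq> carrier R"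
    and one_mem: "\<one> \<in> S"
    and mult_mem: "s \<in> S \<Longrightarrow> t \<in> S \<Longrightarrow> s \<otimes> t \<in> S"
begin

lemma mem_carrier [simp]: "s \<in> S \<Longrightarrow> s \<in> carrier R"
  using subset_carrier by blast

lemma pow_mem: "s \<in> S \<Longrightarrow> s [^] (n::nat) \<in> S"
  by (induction n) (auto simp: one_mem mult_mem)

lemma primeideal_of_maximal_disjoint:
  assumes J: "ideal J R" "J \<inter> S = {}"
    and max: "\<And>J'. ideal J' R \<Longrightarrow> J \<subseteq> J' \<Longrightarrow> J' \<inter> S = {} \<Longrightarrow> J' = J"
  shows "primeideal J R"
proof -
  interpret J: ideal J R
    by (rule J(1))
  have meets: "\<exists>j\<in>J. \<exists>r\<in>carrier R. j \<oplus> r \<otimes> a \<in> S" if a: "a \<in> carrier R" "a \<notin> J" for a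
  proof -
    have "J \<union> PIdl a \<subseteq> J <+> PIdl a"
      unfolding union_genideal[OF J(1) cgenideal_ideal[OF a(1)], symmetric]
      using J.Icarr ideal.Icarr[OF cgenideal_ideal[OF a(1)]] by (intro genideal_self) blast
    with a cgenideal_self[OF a(1)] max add_ideals[OF J(1) cgenideal_ideal[OF a(1)]]
    have "(J <+> PIdl a) \<inter> S \<noteq> {}"
      by blast
    then show ?thesis
      by (auto simp: set_add_def' cgenideal_def)
  qed
  show ?thesis
  proof (rule primeidealI)
    show "carrier R \<noteq> J"
      using J(2) one_mem by auto
    fix a b assume ab: "a \<in> carrier R" "b \<in> carrier R" "a \<otimes> b \<in> J"
    show "a \<in> J \<or> b \<in> J"
    proof (rule ccontr)
      assume "\<not> (a \<in> J \<or> b \<in> J)"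
      then obtain j1 r1 j2 r2 where
        j: "j1 \<in> J" "r1 \<in> carrier R" "j1 \<oplus> r1 \<otimes> a \<in> S"
           "j2 \<in> J" "r2 \<in> carrier R" "j2 \<oplus> r2 \<otimes> b \<in> S"
        using meets ab(1,2) by meson
      have "(j1 \<oplus> r1 \<otimes> a) \<otimes> (j2 \<oplus> r2 \<otimes> b) =
          j1 \<otimes> (j2 \<oplus> r2 \<otimes> b) \<oplus> (j2 \<otimes> (r1 \<otimes> a) \<oplus> (r1 \<otimes> r2) \<otimes> (a \<otimes> b))"
        using ab(1,2) j(2,5) J.Icarr[OF j(1)] J.Icarr[OF j(4)] by algebra
      also have "\<dots> \<in> J"
        using j ab J.Icarr by (simp add: J.a_closed J.I_r_closed J.I_l_closed)
      finally show False
        using J(2) mult_mem[OF j(3,6)] by blast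
    qed
  qed (use J(1) in \<open>auto intro: is_cring\<close>)
qed

lemma exists_primeideal_disjoint:
  assumes "\<zero> \<notin> S"
  obtains Q where "primeideal Q R" "Q \<inter> S = {}"
proof -
  have "{\<zero>} \<inter> S = {}"
    using assms by blast
  then obtain J where "ideal J R" "J \<inter> S = {}"
    and "\<And>J'. ideal J' R \<Longrightarrow> J \<subseteq> J' \<Longrightarrow> J' \<inter> S = {} \<Longrightarrow> J' = J"
    by (rule exists_maximal_ideal_disjoint[OF zeroideal]) blast
  then show ?thesis
    using primeideal_of_maximal_disjoint that by blast
qed

abbreviation Loc :: "('a \<times> 'a) set ring"
  where "Loc \<equiv> localization R S"

lemma loc_rel_iff:
  "((a, s), (b, t)) \<in> loc_rel R S \<longleftrightarrow> a \<in> carrier R \<and> s \<in> S \<and> b \<in> carrier R \<and> t \<in> S \<and>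
     (\<exists>u\<in>S. u \<otimes> (a \<otimes> t \<ominus> b \<otimes> s) = \<zero>)"
  by (simp add: loc_rel_def)

lemma trans_loc_rel: "trans (loc_rel R S)"
proof (rule transI)
  fix x y z assume "(x, y) \<in> loc_rel R S" "(y, z) \<in> loc_rel R S"
  then obtain a s b t c r u v where xyz: "x = (a, s)" "y = (b, t)" "z = (c, r)"
    and h: "a \<in> carrier R" "b \<in> carrier R" "c \<in> carrier R"
    "s \<in> S" "t \<in> S" "r \<in> S" "u \<in> S" "v \<in> S"
    "u \<otimes> (a \<otimes> t \<ominus> b \<otimes> s) = \<zero>" "v \<otimes> (b \<otimes> r \<ominus> c \<otimes> t) = \<zero>"
    by (cases x, cases y, cases z) (auto simp: loc_rel_iff)
  have "(u \<otimes> v \<otimes> t) \<otimes> (a \<otimes> r \<ominus> c \<otimes> s)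
      = (v \<otimes> r) \<otimes> (u \<otimes> (a \<otimes> t \<ominus> b \<otimes> s)) \<oplus> (u \<otimes> s) \<otimes> (v \<otimes> (b \<otimes> r \<ominus> c \<otimes> t))"
    using h(1-3) h(4-8)[THEN mem_carrier] by algebra
  also have "\<dots> = \<zero>"
    using h by simp
  finally show "(x, z) \<in> loc_rel R S"
    using xyz h by (auto simp: loc_rel_iff intro!: bexI[of _ "u \<otimes> v \<otimes> t"] mult_mem)
qed

lemma equiv_loc_rel: "equiv (carrier R \<times> S) (loc_rel R S)"
proof (rule equivI)
  show "loc_rel R S \<subseteq> (carrier R \<times> S) \<times> (carrier R \<times> S)"
    by (auto simp: loc_rel_def)
  show "refl_on (carrier R \<times> S) (loc_rel R S)"
    by (rule refl_onI) (auto simp: loc_rel_iff a_minus_def r_neg intro!: bexI[OF _ one_mem])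
  show "sym (loc_rel R S)"
  proof (rule symI)
    fix x y assume "(x, y) \<in> loc_rel R S"
    then obtain a s b t u where xy: "x = (a, s)" "y = (b, t)"
      and h: "a \<in> carrier R" "s \<in> S" "b \<in> carrier R" "t \<in> S" "u \<in> S"
      "u \<otimes> (a \<otimes> t \<ominus> b \<otimes> s) = \<zero>"
      by (cases x, cases y) (auto simp: loc_rel_iff)
    have "u \<otimes> (b \<otimes> s \<ominus> a \<otimes> t) = \<ominus> (u \<otimes> (a \<otimes> t \<ominus> b \<otimes> s))"
      using h(2,4,5)[THEN mem_carrier] h(1,3) by algebra
    with xy h show "(y, x) \<in> loc_rel R S"
      by (auto simp: loc_rel_iff)
  qed
  show "trans (loc_rel R S)"
    by (rule trans_loc_rel)
qed

lemma frac_eq_iff: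
  assumes "a \<in> carrier R" "s \<in> S" "b \<in> carrier R" "t \<in> S"
  shows "frac R S a s = frac R S b t \<longleftrightarrow> (\<exists>u\<in>S. u \<otimes> (a \<otimes> t \<ominus> b \<otimes> s) = \<zero>)"
  unfolding frac_def using assms eq_equiv_class_iff[OF equiv_loc_rel, of "(a, s)" "(b, t)"]
  by (simp add: loc_rel_iff)

lemma frac_eqI:
  assumes "a \<in> carrier R" "s \<in> S" "b \<in> carrier R" "t \<in> S" "a \<otimes> t = b \<otimes> s"
  shows "frac R S a s = frac R S b t"
  using assms by (auto simp: frac_eq_iff a_minus_def r_neg intro!: bexI[OF _ one_mem])

lemma frac_closed: "a \<in> carrier R \<Longrightarrow> s \<in> S \<Longrightarrow> frac R S a s \<in> carrier Loc"
  by (auto simp: localization_def frac_def intro: quotientI)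

lemma carrier_localizationE:
  assumes "X \<in> carrier Loc"
  obtains a s where "a \<in> carrier R" "s \<in> S" "X = frac R S a s"
  using assms by (auto simp: localization_def frac_def elim!: quotientE)

lemma UN_frac_frac:
  assumes "a \<in> carrier R" "s \<in> S" "b \<in> carrier R" "t \<in> S"
    and "\<And>a' s' b' t'. ((a, s), (a', s')) \<in> loc_rel R S \<Longrightarrow> ((b, t), (b', t')) \<in> loc_rel R S \<Longrightarrow>
      F (a', s') (b', t') = C"
  shows "(\<Union>x\<in>frac R S a s. \<Union>y\<in>frac R S b t. F x y) = C"
proof -
  have "F x y = C" if "x \<in> frac R S a s" "y \<in> frac R S b t" for x y
    using that assms(5)[of "fst x" "snd x" "fst y" "snd y"] by (simp add: frac_def)
  moreover have "(a, s) \<in> frac R S a s" "(b, t) \<in> frac R S b t"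
    using assms(1-4) equiv_loc_rel by (auto simp: frac_def equiv_def refl_on_def)
  ultimately show ?thesis
    by blast
qed

lemma mult_frac:
  assumes "a \<in> carrier R" "s \<in> S" "b \<in> carrier R" "t \<in> S"
  shows "frac R S a s \<otimes>\<^bsub>Loc\<^esub> frac R S b t = frac R S (a \<otimes> b) (s \<otimes> t)"
proof -
  have "frac R S (a' \<otimes> b') (s' \<otimes> t') = frac R S (a \<otimes> b) (s \<otimes> t)"
    if rel: "((a, s), (a', s')) \<in> loc_rel R S" "((b, t), (b', t')) \<in> loc_rel R S" for a' s' b' t'
  proof -
    obtain u v where h: "a' \<in> carrier R" "s' \<in> S" "b' \<in> carrier R" "t' \<in> S" "u \<in> S" "v \<in> S"
      "u \<otimes> (a \<otimes> s' \<ominus> a' \<otimes> s) = \<zero>" "v \<otimes> (b \<otimes> t' \<ominus> b' \<otimes> t) = \<zero>"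
      using rel by (auto simp: loc_rel_iff)
    have "(u \<otimes> v) \<otimes> ((a' \<otimes> b') \<otimes> (s \<otimes> t) \<ominus> (a \<otimes> b) \<otimes> (s' \<otimes> t'))
        = \<ominus> ((v \<otimes> b \<otimes> t') \<otimes> (u \<otimes> (a \<otimes> s' \<ominus> a' \<otimes> s))
            \<oplus> (u \<otimes> a' \<otimes> s) \<otimes> (v \<otimes> (b \<otimes> t' \<ominus> b' \<otimes> t)))"
      using assms(1,3) h(1,3) assms(2,4)[THEN mem_carrier] h(2,4,5,6)[THEN mem_carrier] by algebra
    also have "\<dots> = \<zero>"
      using assms h by simp
    finally show ?thesis
      using assms h by (subst frac_eq_iff) (auto intro!: bexI[of _ "u \<otimes> v"] mult_mem)
  qed
  then show ?thesis
    using assms by (simp add: localization_def UN_frac_frac)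
qed

lemma add_frac:
  assumes "a \<in> carrier R" "s \<in> S" "b \<in> carrier R" "t \<in> S"
  shows "frac R S a s \<oplus>\<^bsub>Loc\<^esub> frac R S b t = frac R S (a \<otimes> t \<oplus> b \<otimes> s) (s \<otimes> t)"
proof -
  have "frac R S (a' \<otimes> t' \<oplus> b' \<otimes> s') (s' \<otimes> t') = frac R S (a \<otimes> t \<oplus> b \<otimes> s) (s \<otimes> t)"
    if rel: "((a, s), (a', s')) \<in> loc_rel R S" "((b, t), (b', t')) \<in> loc_rel R S" for a' s' b' t'
  proof -
    obtain u v where h: "a' \<in> carrier R" "s' \<in> S" "b' \<in> carrier R" "t' \<in> S" "u \<in> S" "v \<in> S"
      "u \<otimes> (a \<otimes> s' \<ominus> a' \<otimes> s) = \<zero>" "v \<otimes> (b \<otimes> t' \<ominus> b' \<otimes> t) = \<zero>"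
      using rel by (auto simp: loc_rel_iff)
    have "(u \<otimes> v) \<otimes> ((a' \<otimes> t' \<oplus> b' \<otimes> s') \<otimes> (s \<otimes> t) \<ominus> (a \<otimes> t \<oplus> b \<otimes> s) \<otimes> (s' \<otimes> t'))
        = \<ominus> ((v \<otimes> t \<otimes> t') \<otimes> (u \<otimes> (a \<otimes> s' \<ominus> a' \<otimes> s))
            \<oplus> (u \<otimes> s \<otimes> s') \<otimes> (v \<otimes> (b \<otimes> t' \<ominus> b' \<otimes> t)))"
      using assms(1,3) h(1,3) assms(2,4)[THEN mem_carrier] h(2,4,5,6)[THEN mem_carrier] by algebra
    also have "\<dots> = \<zero>"
      using assms h by simp
    finally show ?thesis
      using assms h by (subst frac_eq_iff) (auto intro!: bexI[of _ "u \<otimes> v"] mult_mem)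
  qed
  then show ?thesis
    using assms by (simp add: localization_def UN_frac_frac)
qed

lemma zero_localization: "\<zero>\<^bsub>Loc\<^esub> = frac R S \<zero> \<one>"
  by (simp add: localization_def)

lemma one_localization: "\<one>\<^bsub>Loc\<^esub> = frac R S \<one> \<one>"
  by (simp add: localization_def)

lemma add_frac_mult_distrib:
  assumes "a \<in> carrier R" "b \<in> carrier R" "c \<in> carrier R" "s \<in> S" "t \<in> S" "r \<in> S"
  shows "(frac R S a s \<oplus>\<^bsub>Loc\<^esub> frac R S b t) \<otimes>\<^bsub>Loc\<^esub> frac R S c r
    = frac R S a s \<otimes>\<^bsub>Loc\<^esub> frac R S c r \<oplus>\<^bsub>Loc\<^esub> frac R S b t \<otimes>\<^bsub>Loc\<^esub> frac R S c r"
proof -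
  have "frac R S ((a \<otimes> t \<oplus> b \<otimes> s) \<otimes> c) (s \<otimes> t \<otimes> r)
      = frac R S (a \<otimes> c \<otimes> (t \<otimes> r) \<oplus> b \<otimes> c \<otimes> (s \<otimes> r)) (s \<otimes> r \<otimes> (t \<otimes> r))"
  proof (rule frac_eqI)
    show "(a \<otimes> t \<oplus> b \<otimes> s) \<otimes> c \<otimes> (s \<otimes> r \<otimes> (t \<otimes> r))
        = (a \<otimes> c \<otimes> (t \<otimes> r) \<oplus> b \<otimes> c \<otimes> (s \<otimes> r)) \<otimes> (s \<otimes> t \<otimes> r)"
      using assms(1-3) assms(4-6)[THEN mem_carrier] by algebra
  qed (use assms in \<open>simp_all add: mult_mem\<close>)
  with assms show ?thesis
    by (simp add: add_frac mult_frac mult_mem)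
qed

lemma abelian_group_localization: "abelian_group Loc"
proof (rule abelian_groupI)
  \<comment> \<open>for associativity and commutativity the two fractions agree in numerator and denominator\<close>
  fix X Y Z assume "X \<in> carrier Loc" "Y \<in> carrier Loc" "Z \<in> carrier Loc"
  then show "X \<oplus>\<^bsub>Loc\<^esub> Y \<oplus>\<^bsub>Loc\<^esub> Z = X \<oplus>\<^bsub>Loc\<^esub> (Y \<oplus>\<^bsub>Loc\<^esub> Z)"
    by (elim carrier_localizationE) (simp add: add_frac mult_mem,
        rule arg_cong2[where f = "frac R S"]; insert mem_carrier; algebra)
next
  fix X Y assume "X \<in> carrier Loc" "Y \<in> carrier Loc"
  then show "X \<oplus>\<^bsub>Loc\<^esub> Y = Y \<oplus>\<^bsub>Loc\<^esub> X"
    by (elim carrier_localizationE) (simp add: add_frac mult_mem,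
        rule arg_cong2[where f = "frac R S"]; insert mem_carrier; algebra)
next
  fix X Y assume "X \<in> carrier Loc" "Y \<in> carrier Loc"
  then show "X \<oplus>\<^bsub>Loc\<^esub> Y \<in> carrier Loc"
    by (elim carrier_localizationE) (simp add: add_frac frac_closed mult_mem)
next
  show "\<zero>\<^bsub>Loc\<^esub> \<in> carrier Loc"
    by (simp add: zero_localization frac_closed one_mem)
next
  fix X assume "X \<in> carrier Loc"
  then show "\<zero>\<^bsub>Loc\<^esub> \<oplus>\<^bsub>Loc\<^esub> X = X"
    by (elim carrier_localizationE) (simp add: zero_localization add_frac one_mem)
next
  fix X assume "X \<in> carrier Loc"
  then obtain a s where a: "a \<in> carrier R" "s \<in> S" "X = frac R S a s"
    by (rule carrier_localizationE)
  then have "frac R S (\<ominus> a) s \<oplus>\<^bsub>Loc\<^esub> X = \<zero>\<^bsub>Loc\<^esub>"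
    by (simp add: add_frac zero_localization) (rule frac_eqI; simp add: mult_mem one_mem l_minus l_neg)
  with a show "\<exists>Y\<in>carrier Loc. Y \<oplus>\<^bsub>Loc\<^esub> X = \<zero>\<^bsub>Loc\<^esub>"
    using frac_closed by blast
qed

lemma comm_monoid_localization: "comm_monoid Loc"
proof (rule comm_monoidI)
  fix X Y assume "X \<in> carrier Loc" "Y \<in> carrier Loc"
  then show "X \<otimes>\<^bsub>Loc\<^esub> Y \<in> carrier Loc"
    by (elim carrier_localizationE) (simp add: mult_frac frac_closed mult_mem)
next
  show "\<one>\<^bsub>Loc\<^esub> \<in> carrier Loc"
    by (simp add: one_localization frac_closed one_mem)
next
  fix X Y Z assume "X \<in> carrier Loc" "Y \<in> carrier Loc" "Z \<in> carrier Loc"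
  then show "X \<otimes>\<^bsub>Loc\<^esub> Y \<otimes>\<^bsub>Loc\<^esub> Z = X \<otimes>\<^bsub>Loc\<^esub> (Y \<otimes>\<^bsub>Loc\<^esub> Z)"
    by (elim carrier_localizationE) (simp add: mult_frac mult_mem m_assoc)
next
  fix X assume "X \<in> carrier Loc"
  then show "\<one>\<^bsub>Loc\<^esub> \<otimes>\<^bsub>Loc\<^esub> X = X"
    by (elim carrier_localizationE) (simp add: one_localization mult_frac one_mem)
next
  fix X Y assume "X \<in> carrier Loc" "Y \<in> carrier Loc"
  then show "X \<otimes>\<^bsub>Loc\<^esub> Y = Y \<otimes>\<^bsub>Loc\<^esub> X"
    by (elim carrier_localizationE) (simp add: mult_frac m_comm)
qed

lemma cring_localization: "cring Loc"
proof (rule cringI[OF abelian_group_localization comm_monoid_localization])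
  fix X Y Z assume "X \<in> carrier Loc" "Y \<in> carrier Loc" "Z \<in> carrier Loc"
  then show "(X \<oplus>\<^bsub>Loc\<^esub> Y) \<otimes>\<^bsub>Loc\<^esub> Z = X \<otimes>\<^bsub>Loc\<^esub> Z \<oplus>\<^bsub>Loc\<^esub> Y \<otimes>\<^bsub>Loc\<^esub> Z"
    by (elim carrier_localizationE) (simp add: add_frac_mult_distrib)
qed

definition torsion :: "'a set"
  where "torsion = {a \<in> carrier R. \<exists>u\<in>S. u \<otimes> a = \<zero>}"

lemma torsion_ideal: "ideal torsion R"
proof (rule idealI_comm)
  fix a b assume "a \<in> torsion" "b \<in> torsion"
  then obtain u v where h: "a \<in> carrier R" "b \<in> carrier R" "u \<in> S" "v \<in> S"
    "u \<otimes> a = \<zero>" "v \<otimes> b = \<zero>"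
    by (auto simp: torsion_def)
  have "(u \<otimes> v) \<otimes> (a \<oplus> b) = v \<otimes> (u \<otimes> a) \<oplus> u \<otimes> (v \<otimes> b)"
    using h(1,2) h(3,4)[THEN mem_carrier] by algebra
  with h show "a \<oplus> b \<in> torsion"
    by (auto simp: torsion_def intro!: bexI[of _ "u \<otimes> v"] mult_mem)
next
  fix a x assume "a \<in> torsion" "x \<in> carrier R"
  then obtain u where "a \<in> carrier R" "u \<in> S" "u \<otimes> a = \<zero>"
    by (auto simp: torsion_def)
  with \<open>x \<in> carrier R\<close> show "x \<otimes> a \<in> torsion"
    using m_lcomm[of u x a] by (auto simp: torsion_def)
qed (auto simp: torsion_def intro: one_mem)

lemma frac_eq_zero_iff: "a \<in> carrier R \<Longrightarrow> s \<in> S \<Longrightarrow> frac R S a s = \<zero>\<^bsub>Loc\<^esub> \<longleftrightarrow> a \<in> torsion"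
  by (simp add: zero_localization frac_eq_iff one_mem a_minus_def torsion_def)

lemma pow_frac:
  assumes "a \<in> carrier R" "s \<in> S"
  shows "frac R S a s [^]\<^bsub>Loc\<^esub> (n::nat) = frac R S (a [^] n) (s [^] n)"
proof (induction n)
  case 0
  then show ?case
    by (simp add: one_localization)
next
  case (Suc n)
  with assms show ?case
    by (simp add: mult_frac pow_mem)
qed

lemma one_neq_zero_localization_iff: "\<one>\<^bsub>Loc\<^esub> \<noteq> \<zero>\<^bsub>Loc\<^esub> \<longleftrightarrow> torsion \<noteq> carrier R"
proof -
  have "\<one>\<^bsub>Loc\<^esub> \<noteq> \<zero>\<^bsub>Loc\<^esub> \<longleftrightarrow> \<one> \<notin> torsion"
    by (simp add: one_localization frac_eq_zero_iff one_mem)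
  also have "\<dots> \<longleftrightarrow> torsion \<noteq> carrier R"
    using ideal.one_imp_carrier[OF torsion_ideal] by blast
  finally show ?thesis .
qed

lemma zero_divisors_nilpotent_localization_iff:
  "(\<forall>A\<in>carrier Loc. \<forall>B\<in>carrier Loc.
      A \<otimes>\<^bsub>Loc\<^esub> B = \<zero>\<^bsub>Loc\<^esub> \<and> A \<noteq> \<zero>\<^bsub>Loc\<^esub> \<longrightarrow> (\<exists>n::nat. B [^]\<^bsub>Loc\<^esub> n = \<zero>\<^bsub>Loc\<^esub>))
    \<longleftrightarrow> (\<forall>a\<in>carrier R. \<forall>b\<in>carrier R.
      a \<otimes> b \<in> torsion \<and> a \<notin> torsion \<longrightarrow> (\<exists>n::nat. b [^] n \<in> torsion))"
  (is "?loc \<longleftrightarrow> ?tor")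
proof
  assume ?loc
  show ?tor
  proof (intro ballI impI)
    fix a b assume "a \<in> carrier R" "b \<in> carrier R" "a \<otimes> b \<in> torsion \<and> a \<notin> torsion"
    then have "frac R S a \<one> \<otimes>\<^bsub>Loc\<^esub> frac R S b \<one> = \<zero>\<^bsub>Loc\<^esub>" "frac R S a \<one> \<noteq> \<zero>\<^bsub>Loc\<^esub>"
      by (simp_all add: one_mem mult_frac frac_eq_zero_iff)
    with \<open>?loc\<close> obtain n :: nat where "frac R S b \<one> [^]\<^bsub>Loc\<^esub> n = \<zero>\<^bsub>Loc\<^esub>"
      using frac_closed one_mem \<open>a \<in> carrier R\<close> \<open>b \<in> carrier R\<close> by meson
    with \<open>b \<in> carrier R\<close> show "\<exists>n::nat. b [^] n \<in> torsion"
      by (auto simp: pow_frac one_mem frac_eq_zero_iff)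
  qed
next
  assume ?tor
  show ?loc
  proof (intro ballI impI)
    fix A B assume "A \<in> carrier Loc" "B \<in> carrier Loc"
      and AB: "A \<otimes>\<^bsub>Loc\<^esub> B = \<zero>\<^bsub>Loc\<^esub> \<and> A \<noteq> \<zero>\<^bsub>Loc\<^esub>"
    then obtain a s b t where "a \<in> carrier R" "s \<in> S" "A = frac R S a s"
      "b \<in> carrier R" "t \<in> S" "B = frac R S b t"
      by (meson carrier_localizationE)
    with \<open>?tor\<close> AB show "\<exists>n::nat. B [^]\<^bsub>Loc\<^esub> n = \<zero>\<^bsub>Loc\<^esub>"
      by (auto simp: mult_frac pow_frac frac_eq_zero_iff mult_mem pow_mem)
  qed
qed

lemma primary_ring_localization_iff: "primary_ring Loc \<longleftrightarrow> primary_ideal R torsion"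
proof -
  interpret L: cring Loc
    by (rule cring_localization)
  show ?thesis
    by (simp add: L.primary_ring_iff primary_ideal_def torsion_ideal
        one_neq_zero_localization_iff zero_divisors_nilpotent_localization_iff)
qed

end

section \<open>Quasi p.f. rings\<close>

context cring
begin

lemma multiplicative_set_compl_prime:
  assumes "primeideal P R"
  shows "multiplicative_set R (carrier R - P)"
proof
  show "\<one> \<in> carrier R - P"
    using assms ideal.one_imp_carrier primeideal.axioms(1) primeideal.I_notcarr by blast
qed (use primeideal.I_prime[OF assms] in auto)

lemma multiplicative_set_powers:
  assumes "x \<in> carrier R"
  shows "multiplicative_set R (range (\<lambda>n::nat. x [^] n))"
proof
  show "\<one> \<in> range (\<lambda>n::nat. x [^] n)"
    by (metis nat_pow_0 rangeI)
  fix s t assume "s \<in> range (\<lambda>n::nat. x [^] n)" "t \<in> range (\<lambda>n::nat. x [^] n)"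
  then show "s \<otimes> t \<in> range (\<lambda>n::nat. x [^] n)"
    using assms by (auto simp: nat_pow_mult)
qed (use assms in auto)

lemma loc_kernel_eq_torsion:
  "primeideal P R \<Longrightarrow> loc_kernel R P = multiplicative_set.torsion R (carrier R - P)"
  using multiplicative_set.frac_eq_zero_iff[OF multiplicative_set_compl_prime]
    multiplicative_set.one_mem[OF multiplicative_set_compl_prime]
  by (auto simp: loc_kernel_def loc_map_def localization_at_def
      multiplicative_set.torsion_def[OF multiplicative_set_compl_prime])

lemma mem_loc_kernel:
  "primeideal P R \<Longrightarrow> a \<in> loc_kernel R P \<longleftrightarrow> a \<in> carrier R \<and> (\<exists>u\<in>carrier R - P. u \<otimes> a = \<zero>)"
  by (simp add: loc_kernel_eq_torsion multiplicative_set.torsion_def[OF multiplicative_set_compl_prime])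

lemma ideal_loc_kernel: "primeideal P R \<Longrightarrow> ideal (loc_kernel R P) R"
  by (simp add: loc_kernel_eq_torsion multiplicative_set.torsion_ideal[OF multiplicative_set_compl_prime])

lemma primary_ring_localization_at_iff:
  "primeideal P R \<Longrightarrow> primary_ring (localization_at R P) \<longleftrightarrow> primary_ideal R (loc_kernel R P)"
  by (simp add: localization_at_def loc_kernel_eq_torsion
      multiplicative_set.primary_ring_localization_iff[OF multiplicative_set_compl_prime])

lemma quasi_pf_ringI:
  assumes "\<And>f x. f \<in> carrier R \<Longrightarrow> x \<in> ann R f \<Longrightarrow> \<exists>g\<in>ann R f. \<exists>n::nat. (x \<otimes> (\<one> \<ominus> g)) [^] n = \<zero>"
  shows "quasi_pf_ring R"
  using assms ann_ideal by (simp add: quasi_pf_ring_def quasi_pure_def)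

lemma quasi_pf_ringD:
  "quasi_pf_ring R \<Longrightarrow> f \<in> carrier R \<Longrightarrow> x \<in> ann R f \<Longrightarrow>
    \<exists>g\<in>ann R f. \<exists>n::nat. (x \<otimes> (\<one> \<ominus> g)) [^] n = \<zero>"
  by (simp add: quasi_pf_ring_def quasi_pure_def)

lemma one_minus_notin_primeideal:
  assumes "primeideal P R" "g \<in> P"
  shows "\<one> \<ominus> g \<notin> P"
proof
  interpret P: primeideal P R
    by fact
  assume "\<one> \<ominus> g \<in> P"
  then have "(\<one> \<ominus> g) \<oplus> g \<in> P"
    using assms(2) by (rule P.a_closed)
  moreover have "(\<one> \<ominus> g) \<oplus> g = \<one>"
    using P.Icarr[OF assms(2)] by algebra
  ultimately show False
    using P.one_imp_carrier P.I_notcarr by simp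
qed

lemma multiplicative_set_pow_mult_one_minus_ann:
  assumes f: "f \<in> carrier R" and x: "x \<in> carrier R"
  shows "multiplicative_set R {x [^] (n::nat) \<otimes> (\<one> \<ominus> g) | n g. g \<in> ann R f}"
    (is "multiplicative_set R ?T")
proof
  have mem_T: "x [^] n \<otimes> (\<one> \<ominus> g) \<in> ?T" if "g \<in> ann R f" for n :: nat and g
    using that by blast
  show "?T \<subseteq> carrier R"
    using x by (auto simp: ann_def)
  show "\<one> \<in> ?T"
    using mem_T[of \<zero> 0] f by (simp add: ann_def a_minus_def)
  fix s t assume "s \<in> ?T" "t \<in> ?T"
  then obtain m n :: nat and g h where st: "g \<in> ann R f" "h \<in> ann R f"
    "s = x [^] m \<otimes> (\<one> \<ominus> g)" "t = x [^] n \<otimes> (\<one> \<ominus> h)"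
    by blast
  interpret A: ideal "ann R f" R
    by (rule ann_ideal[OF f])
  have gh: "g \<in> carrier R" "h \<in> carrier R"
    using st(1,2) by (simp_all add: A.Icarr)
  have "g \<oplus> h \<ominus> g \<otimes> h \<in> ann R f"
    using st(1,2) gh by (simp add: a_minus_def A.a_closed A.a_inv_closed A.I_r_closed)
  moreover have "s \<otimes> t = (x [^] m \<otimes> x [^] n) \<otimes> (\<one> \<ominus> (g \<oplus> h \<ominus> g \<otimes> h))"
    unfolding st(3,4) using gh nat_pow_closed[OF x] by algebra
  ultimately show "s \<otimes> t \<in> ?T"
    using x mem_T by (simp add: nat_pow_mult)
qed

lemma exists_minimal_prime_avoiding_ann:
  assumes f: "f \<in> carrier R" and "x \<in> ann R f"
    and none: "\<not> (\<exists>g\<in>ann R f. \<exists>n::nat. (x \<otimes> (\<one> \<ominus> g)) [^] n = \<zero>)"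
  obtains P where "minimal_prime R P" "x \<notin> P" "\<And>g. g \<in> ann R f \<Longrightarrow> \<one> \<ominus> g \<notin> P"
proof -
  define T where "T = {x [^] (n::nat) \<otimes> (\<one> \<ominus> g) | n g. g \<in> ann R f}"
  have x: "x \<in> carrier R"
    using \<open>x \<in> ann R f\<close> by (simp add: ann_def)
  interpret T: multiplicative_set R T
    unfolding T_def by (rule multiplicative_set_pow_mult_one_minus_ann[OF f x])
  have "\<zero> \<notin> T"
  proof
    assume "\<zero> \<in> T"
    then obtain n :: nat and g where g: "g \<in> ann R f" "x [^] n \<otimes> (\<one> \<ominus> g) = \<zero>"
      by (auto simp: T_def)
    then have "(x \<otimes> (\<one> \<ominus> g)) [^] Suc n = \<zero>"
      using x by (intro nilpotent_of_pow_mult_eq_zero) (auto simp: ann_def)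
    with none g(1) show False
      by blast
  qed
  then obtain Q where Q: "primeideal Q R" "Q \<inter> T = {}"
    by (rule T.exists_primeideal_disjoint)
  obtain P where P: "minimal_prime R P" "P \<subseteq> Q"
    using exists_minimal_prime_below[OF Q(1)] by blast
  have zero_ann: "\<zero> \<in> ann R f"
    using f by (simp add: ann_def)
  have mem_T: "x [^] n \<otimes> (\<one> \<ominus> g) \<in> T" if "g \<in> ann R f" for n :: nat and g
    unfolding T_def using that by blast
  show ?thesis
  proof (rule that[OF P(1)])
    have "x [^] (1::nat) \<otimes> (\<one> \<ominus> \<zero>) \<notin> P"
      using mem_T[OF zero_ann] P(2) Q(2) by blast
    then show "x \<notin> P"
      using x by (simp add: a_minus_def)
  next
    fix g assume "g \<in> ann R f"
    then have "x [^] (0::nat) \<otimes> (\<one> \<ominus> g) \<notin> P"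
      using mem_T P(2) Q(2) by blast
    then show "\<one> \<ominus> g \<notin> P"
      using \<open>g \<in> ann R f\<close> by (simp add: ann_def)
  qed
qed

lemma exists_maximalideal_ann_torsion:
  assumes f: "f \<in> carrier R" and "x \<in> ann R f"
    and none: "\<not> (\<exists>g\<in>ann R f. \<exists>n::nat. (x \<otimes> (\<one> \<ominus> g)) [^] n = \<zero>)"
  obtains M where "maximalideal M R" "ann R f \<subseteq> M"
    "\<And>w n. w \<in> carrier R \<Longrightarrow> w \<otimes> x [^] (n::nat) = \<zero> \<Longrightarrow> w \<in> M"
proof -
  have x: "x \<in> carrier R"
    using \<open>x \<in> ann R f\<close> by (simp add: ann_def)
  interpret X: multiplicative_set R "range (\<lambda>n::nat. x [^] n)"
    by (rule multiplicative_set_powers[OF x])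
  define I where "I = Idl (ann R f \<union> X.torsion)"
  have "ann R f \<union> X.torsion \<subseteq> carrier R"
    by (auto simp: ann_def X.torsion_def)
  then have "ideal I R" and sub: "ann R f \<union> X.torsion \<subseteq> I"
    unfolding I_def by (rule genideal_ideal, rule genideal_self)
  have "\<one> \<notin> I"
  proof
    assume "\<one> \<in> I"
    then obtain g w where gw: "g \<in> ann R f" "w \<in> X.torsion" "\<one> = g \<oplus> w"
      by (auto simp: I_def union_genideal[OF ann_ideal[OF f] X.torsion_ideal] set_add_def')
    then obtain n :: nat where w: "w \<in> carrier R" "x [^] n \<otimes> w = \<zero>"
      by (auto simp: X.torsion_def)
    have "(g \<oplus> w) \<ominus> g = w"
      using gw(1) w(1) by (simp add: ann_def) algebra
    with gw(3) have "\<one> \<ominus> g = w"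
      by simp
    have "(x \<otimes> (\<one> \<ominus> g)) [^] Suc n = \<zero>"
      unfolding \<open>\<one> \<ominus> g = w\<close> by (rule nilpotent_of_pow_mult_eq_zero[OF x w])
    with none gw(1) show False
      by blast
  qed
  then obtain M where "maximalideal M R" "I \<subseteq> M"
    using exists_maximalideal_superset[OF \<open>ideal I R\<close>] by blast
  moreover have "w \<in> X.torsion" if "w \<in> carrier R" "w \<otimes> x [^] (n::nat) = \<zero>" for w n
    using that x by (auto simp: X.torsion_def m_comm)
  ultimately show ?thesis
    using that sub by (meson Un_subset_iff subset_trans subsetD)
qed

lemma quasi_pf_ring_primary_loc_kernel:
  assumes qpf: "quasi_pf_ring R" and P: "primeideal P R"
  shows "primary_ideal R (loc_kernel R P)"
  unfolding primary_ideal_def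
proof (intro conjI ballI impI)
  interpret S: multiplicative_set R "carrier R - P"
    by (rule multiplicative_set_compl_prime[OF P])
  show "ideal (loc_kernel R P) R"
    by (rule ideal_loc_kernel[OF P])
  have "\<one> \<notin> loc_kernel R P"
    using P primeideal.axioms(1)[OF P] by (auto simp: mem_loc_kernel additive_subgroup.zero_closed ideal.axioms(1))
  then show "loc_kernel R P \<noteq> carrier R"
    by blast
  fix a b assume "a \<in> carrier R" "b \<in> carrier R" "a \<otimes> b \<in> loc_kernel R P \<and> a \<notin> loc_kernel R P"
  then obtain u where ab: "a \<in> carrier R" "b \<in> carrier R" "a \<notin> loc_kernel R P"
    and u: "u \<in> carrier R - P" "u \<otimes> (a \<otimes> b) = \<zero>"
    using P by (auto simp: mem_loc_kernel)
  have "b \<in> ann R (u \<otimes> a)"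
    using ab u m_lcomm[of b u a] by (auto simp: ann_def m_comm m_assoc)
  then obtain g n where g: "g \<in> ann R (u \<otimes> a)" and nil: "(b \<otimes> (\<one> \<ominus> g)) [^] (n::nat) = \<zero>"
    using quasi_pf_ringD[OF qpf _ \<open>b \<in> ann R (u \<otimes> a)\<close>] ab u by blast
  have gc: "g \<in> carrier R" "(g \<otimes> u) \<otimes> a = \<zero>"
    using g ab u by (auto simp: ann_def m_assoc)
  \<comment> \<open>otherwise \<open>g \<otimes> u \<notin> P\<close> would kill \<open>a\<close>\<close>
  have "g \<in> P"
    using gc ab P S.mult_mem[of g u] u by (auto simp: mem_loc_kernel)
  then have "(\<one> \<ominus> g) [^] n \<in> carrier R - P"
    using gc(1) S.pow_mem[of "\<one> \<ominus> g" n] one_minus_notin_primeideal[OF P] by simp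
  moreover have "(\<one> \<ominus> g) [^] n \<otimes> b [^] n = \<zero>"
    using nil gc ab by (simp add: nat_pow_distrib m_comm)
  ultimately show "\<exists>n::nat. b [^] n \<in> loc_kernel R P"
    using P ab by (auto simp: mem_loc_kernel)
qed

lemma quasi_pf_ring_pure_loc_kernel:
  assumes qpf: "quasi_pf_ring R" and P: "primeideal P R"
  shows "pure_ideal R (loc_kernel R P)"
  unfolding pure_ideal_def
proof (intro conjI ballI)
  interpret S: multiplicative_set R "carrier R - P"
    by (rule multiplicative_set_compl_prime[OF P])
  show "ideal (loc_kernel R P) R"
    by (rule ideal_loc_kernel[OF P])
  fix f assume "f \<in> loc_kernel R P"
  then obtain u where f: "f \<in> carrier R" and u: "u \<in> carrier R - P" "u \<otimes> f = \<zero>"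
    using P by (auto simp: mem_loc_kernel)
  then have "u \<in> ann R f"
    by (simp add: ann_def)
  then obtain g n where g: "g \<in> carrier R" "g \<otimes> f = \<zero>" and nil: "(u \<otimes> (\<one> \<ominus> g)) [^] (n::nat) = \<zero>"
    using quasi_pf_ringD[OF qpf f \<open>u \<in> ann R f\<close>] by (auto simp: ann_def)
  have "u [^] n \<otimes> (\<one> \<ominus> g) [^] n = \<zero>"
    using nil u g by (simp add: nat_pow_distrib)
  then have "(\<one> \<ominus> g) [^] n \<in> loc_kernel R P"
    using P g u S.pow_mem[of u n] by (auto simp: mem_loc_kernel)
  moreover have "f \<otimes> (\<one> \<ominus> (\<one> \<ominus> g) [^] n) = \<zero>"
  proof -
    have "(\<one> \<ominus> g) [^] n \<in> carrier R"
      using g by simp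
    with f have "f \<otimes> (\<one> \<ominus> (\<one> \<ominus> g) [^] n) = f \<ominus> f \<otimes> (\<one> \<ominus> g) [^] n"
      by algebra
    also have "\<dots> = f \<ominus> f"
      using f g by (simp only: mult_pow_one_minus_annihilator)
    finally show ?thesis
      using f by (simp add: a_minus_def r_neg)
  qed
  ultimately show "\<exists>g\<in>loc_kernel R P. f \<otimes> (\<one> \<ominus> g) = \<zero>"
    by blast
qed

lemma primary_loc_kernels_quasi_pf_ring:
  assumes primary: "\<And>M. maximalideal M R \<Longrightarrow> primary_ideal R (loc_kernel R M)"
  shows "quasi_pf_ring R"
proof (rule quasi_pf_ringI, rule ccontr)
  fix f x assume f: "f \<in> carrier R" and x: "x \<in> ann R f"
    and "\<not> (\<exists>g\<in>ann R f. \<exists>n::nat. (x \<otimes> (\<one> \<ominus> g)) [^] n = \<zero>)"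
  then obtain M where M: "maximalideal M R" "ann R f \<subseteq> M"
    and tor: "\<And>w n. w \<in> carrier R \<Longrightarrow> w \<otimes> x [^] (n::nat) = \<zero> \<Longrightarrow> w \<in> M"
    by (rule exists_maximalideal_ann_torsion) (rule that)
  have P: "primeideal M R"
    by (rule maximalideal_prime[OF M(1)])
  have xc: "x \<in> carrier R" "f \<otimes> x = \<zero>"
    using x f by (auto simp: ann_def m_comm)
  show False
  proof (cases "f \<in> loc_kernel R M")
    case True
    then obtain v where "v \<in> carrier R - M" "v \<otimes> f = \<zero>"
      using P by (auto simp: mem_loc_kernel)
    with M(2) show False
      by (auto simp: ann_def)
  next
    case False
    moreover have "f \<otimes> x \<in> loc_kernel R M"
      using xc ideal_loc_kernel[OF P] by (simp add: additive_subgroup.zero_closed ideal.axioms(1))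
    ultimately obtain n :: nat where "x [^] n \<in> loc_kernel R M"
      using primary[OF M(1)] f xc(1) unfolding primary_ideal_def by blast
    with P tor show False
      by (auto simp: mem_loc_kernel)
  qed
qed

lemma pure_loc_kernels_quasi_pf_ring:
  assumes pure: "\<And>P. minimal_prime R P \<Longrightarrow> pure_ideal R (loc_kernel R P)"
  shows "quasi_pf_ring R"
proof (rule quasi_pf_ringI, rule ccontr)
  fix f x assume f: "f \<in> carrier R" and x: "x \<in> ann R f"
    and "\<not> (\<exists>g\<in>ann R f. \<exists>n::nat. (x \<otimes> (\<one> \<ominus> g)) [^] n = \<zero>)"
  then obtain P where P: "minimal_prime R P" "x \<notin> P"
    and avoid: "\<And>g. g \<in> ann R f \<Longrightarrow> \<one> \<ominus> g \<notin> P"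
    by (rule exists_minimal_prime_avoiding_ann) (rule that)
  have prime: "primeideal P R"
    using P(1) by (simp add: minimal_prime_def)
  have "f \<in> loc_kernel R P"
    using x f P(2) prime by (auto simp: mem_loc_kernel ann_def)
  then obtain g where g: "g \<in> loc_kernel R P" "f \<otimes> (\<one> \<ominus> g) = \<zero>"
    using pure[OF P(1)] by (auto simp: pure_ideal_def)
  then obtain v where gv: "g \<in> carrier R" "v \<in> carrier R - P" "v \<otimes> g = \<zero>"
    using prime by (auto simp: mem_loc_kernel)
  have "\<one> \<ominus> g \<in> ann R f"
    using g(2) gv(1) f by (simp add: ann_def m_comm)
  moreover have "\<one> \<ominus> (\<one> \<ominus> g) = g"
    using gv(1) by algebra
  ultimately have "g \<notin> P"
    using avoid by metis
  moreover have "v \<otimes> g \<in> P"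
    using gv(3) primeideal.axioms(1)[OF prime]
    by (simp add: additive_subgroup.zero_closed ideal.axioms(1))
  ultimately show False
    using primeideal.I_prime[OF prime] gv by blast
qed

end

theorem theorem4p1:
  fixes R :: "('a, 'b) ring_scheme"
  assumes "cring R"
  shows "(quasi_pf_ring R \<longleftrightarrow> (\<forall>P. primeideal P R \<longrightarrow> primary_ring (localization_at R P)))
       \<and> (quasi_pf_ring R \<longleftrightarrow> (\<forall>M. maximalideal M R \<longrightarrow> primary_ring (localization_at R M)))
       \<and> (quasi_pf_ring R \<longleftrightarrow> (\<forall>P. minimal_prime R P \<longrightarrow> pure_ideal R (loc_kernel R P)))
       \<and> (quasi_pf_ring R \<longleftrightarrow> (\<forall>M. maximalideal M R \<longrightarrow> primary_ideal R (loc_kernel R M)))"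
proof -
  interpret cring R
    by fact
  have max_prime: "primeideal M R" if "maximalideal M R" for M
    using that by (rule maximalideal_prime)
  have min_prime: "primeideal P R" if "minimal_prime R P" for P
    using that by (simp add: minimal_prime_def)
  show ?thesis
    using quasi_pf_ring_primary_loc_kernel primary_loc_kernels_quasi_pf_ring
      quasi_pf_ring_pure_loc_kernel pure_loc_kernels_quasi_pf_ring
      primary_ring_localization_at_iff max_prime min_prime
    by metis
qed

end
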